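(* There exist elements $c_1,\dots,c_r$ of $\mathbb Q(R_{1,0},\dots,R_{r,1})$, independent of $n$, such that with $c_0=c_{r+1}=1$, $$\sum_{m=0}^{r+1}(-1)^m\,c_{r+1-m}\,R_{1,n+m}=0\qquad\text{for all } n\in\mathbb Z.$$
   Context: Fix an integer $r\ge1$ and let $I_r=\{1,\dots,r\}$. Let $R_{1,0},\dots,R_{r,0},R_{1,1},\dots,R_{r,1}$ be $2r$ algebraically independent indeterminates over $\mathbb Q$. The $A_r$ $Q$-system is the unique family $(R_{\alpha,n})_{0\le\alpha\le r+1,\ n\in\mathbb Z}$ of nonzero elements of $\mathbb Q(R_{1,0},\dots,R_{r,1})$ with these initial values, $R_{0,n}=R_{r+1,n}=1$ for all $n$, and $R_{\alpha,n+1}R_{\alpha,n-1}=R_{\alpha,n}^2+R_{\alpha+1,n}R_{\alpha-1,n}$ for $\alpha\in I_r$, $n\in\mathbb Z$. *)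

theory Defs
  imports Complex_Main "HOL-Library.Poly_Mapping"
begin

text \<open>Multivariate polynomials over the rationals in variables of type 'v:
  finitely supported maps from monomials (finitely supported exponent maps) to coefficients.\<close>
type_synonym 'v ratpoly = "('v \<Rightarrow>\<^sub>0 nat) \<Rightarrow>\<^sub>0 rat"

definition mpoly_eval :: "'v ratpoly \<Rightarrow> ('v \<Rightarrow> 'a::field_char_0) \<Rightarrow> 'a" where
  "mpoly_eval p x = (\<Sum>mon\<in>Poly_Mapping.keys p. of_rat (Poly_Mapping.lookup p mon) * (\<Prod>v\<in>Poly_Mapping.keys mon. x v ^ Poly_Mapping.lookup mon v))"

definition alg_indep_over_Q :: "'v set \<Rightarrow> ('v \<Rightarrow> 'a::field_char_0) \<Rightarrow> bool" where
  "alg_indep_over_Q V x \<longleftrightarrow>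
     inj_on x V \<and>
     (\<forall>p::'v ratpoly. (\<forall>m\<in>Poly_Mapping.keys p. Poly_Mapping.keys m \<subseteq> V) \<longrightarrow> mpoly_eval p x = 0 \<longrightarrow> p = 0)"

inductive_set rat_subfield :: "'a::field_char_0 set \<Rightarrow> 'a set" for S where
  rat: "of_rat q \<in> rat_subfield S"
| gen: "s \<in> S \<Longrightarrow> s \<in> rat_subfield S"
| add: "a \<in> rat_subfield S \<Longrightarrow> b \<in> rat_subfield S \<Longrightarrow> a + b \<in> rat_subfield S"
| neg: "a \<in> rat_subfield S \<Longrightarrow> - a \<in> rat_subfield S"
| mult: "a \<in> rat_subfield S \<Longrightarrow> b \<in> rat_subfield S \<Longrightarrow> a * b \<in> rat_subfield S"
| inv: "a \<in> rat_subfield S \<Longrightarrow> inverse a \<in> rat_subfield S"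

end

theory Submission
  imports Defs "Jordan_Normal_Form.Determinant"
begin

(* For the sequence f = R 1 let
   H_a(n) be the a x a Hankel determinant det (f (n + i + j))_{i,j<a}.
   (1) The Desnanot-Jacobi identity, specialised to Hankel matrices, reads
       H_{a+2}(n) H_a(n+2) = H_{a+1}(n) H_{a+1}(n+2) - H_{a+1}(n+1)^2,
       which is exactly the Q-system relation; by induction H_a(n) = R a (n + a - 1)
       for a <= r + 1.  Hence H_{r+1} = R (r+1) = 1 and, again by Desnanot-Jacobi,
       H_{r+2} = 0 identically.
   (2) A sequence whose Hankel determinants of size N never vanish while those of
       size N + 1 vanish identically satisfies a linear recurrence of order N whose
       coefficients are the (unique) solution of the Hankel system at n = 0; by
       Cramer's rule these lie in the field generated by the entries.  Comparing
       H_N(n+1) with H_N(n) fixes the constant coefficient v 0 = (-1)^N.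
   (3) All R a n lie in Q(initial values), since the Q-system can be solved forwards
       and backwards in n.  Rewriting the recurrence with alternating signs gives
       the theorem.  Only the Q-system
   relation, its boundary values and nonvanishing are used. *)

definition detf :: "nat \<Rightarrow> (nat \<Rightarrow> nat \<Rightarrow> 'a::comm_ring_1) \<Rightarrow> 'a" where
  "detf n g = det (mat n n (\<lambda>(i,j). g i j))"

lemma detf_cong:
  assumes "\<And>i j. i < n \<Longrightarrow> j < n \<Longrightarrow> g i j = h i j"
  shows "detf n g = detf n h"
proof -
  have "mat n n (\<lambda>(i,j). g i j) = mat n n (\<lambda>(i,j). h i j)"
    by (rule eq_matI) (auto simp: assms)
  thus ?thesis unfolding detf_def by simp
qed

lemma detf_0 [simp]: "detf 0 g = 1"
  unfolding detf_def by (simp add: det_dim_zero)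

lemma detf_laplace:
  assumes i: "i < Suc n"
  shows "detf (Suc n) g = (\<Sum>j<Suc n. g i j * ((-1)^(i+j) *
     detf n (\<lambda>a b. g (if a < i then a else Suc a) (if b < j then b else Suc b))))"
proof -
  let ?A = "mat (Suc n) (Suc n) (\<lambda>(i,j). g i j)"
  have "detf (Suc n) g = (\<Sum>j<Suc n. ?A $$ (i,j) * cofactor ?A i j)"
    unfolding detf_def by (rule laplace_expansion_row[OF _ i]) simp
  also have "\<dots> = (\<Sum>j<Suc n. g i j * ((-1)^(i+j) *
     detf n (\<lambda>a b. g (if a < i then a else Suc a) (if b < j then b else Suc b))))"
  proof (rule sum.cong[OF refl])
    fix j assume j: "j \<in> {..<Suc n}"
    have "mat_delete ?A i j =
        mat n n (\<lambda>(a,b). g (if a < i then a else Suc a) (if b < j then b else Suc b))"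
      unfolding mat_delete_def by (rule eq_matI) auto
    thus "?A $$ (i,j) * cofactor ?A i j = g i j * ((-1)^(i+j) *
     detf n (\<lambda>a b. g (if a < i then a else Suc a) (if b < j then b else Suc b)))"
      using i j unfolding cofactor_def detf_def by simp
  qed
  finally show ?thesis .
qed

lemma detf_1: "detf (Suc 0) g = g 0 0"
  using detf_laplace[of 0 0 g] by simp

lemma detf_unit_row:
  assumes i: "i < Suc n" and j: "j < Suc n"
    and zero: "\<And>b. b < Suc n \<Longrightarrow> b \<noteq> j \<Longrightarrow> g i b = 0"
  shows "detf (Suc n) g = g i j * ((-1)^(i+j) *
     detf n (\<lambda>a b. g (if a < i then a else Suc a) (if b < j then b else Suc b)))"
  unfolding detf_laplace[OF i]
  by (subst sum.remove[where x=j]) (use j zero in \<open>auto intro!: sum.neutral\<close>)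

lemma detf_add_row:
  assumes i: "i < n" and k: "k < n" and ki: "k \<noteq> i"
  shows "detf n (\<lambda>a b. if a = i then g i b + c * g k b else g a b) = detf n g"
proof -
  let ?A = "mat n n (\<lambda>(i,j). g i j)"
  have "addrow c i k ?A = mat n n (\<lambda>(a,b). if a = i then g i b + c * g k b else g a b)"
    by (rule eq_matI) (use i k in auto)
  moreover have "det (addrow c i k ?A) = det ?A"
    by (rule det_addrow[OF k]) (use ki in auto)
  ultimately show ?thesis unfolding detf_def by simp
qed

lemma detf_add_rows:
  assumes i: "i < n" and rows: "\<And>k. k < m \<Longrightarrow> s + k < n \<and> s + k \<noteq> i"
    and h: "\<And>a b. a < n \<Longrightarrow> b < n \<Longrightarrow>
      h a b = (if a = i then g i b + (\<Sum>k<m. c k * g (s + k) b) else g a b)"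
  shows "detf n h = detf n g"
proof -
  have "detf n (\<lambda>a b. if a = i then g i b + (\<Sum>k<m. c k * g (s + k) b) else g a b) = detf n g"
    using rows
  proof (induction m)
    case 0
    show ?case by (rule detf_cong) simp
  next
    case (Suc m)
    let ?h = "\<lambda>a b. if a = i then g i b + (\<Sum>k<m. c k * g (s + k) b) else g a b"
    have sm: "s + m < n" "s + m \<noteq> i" using Suc.prems by auto
    have "detf n (\<lambda>a b. if a = i then g i b + (\<Sum>k<Suc m. c k * g (s + k) b) else g a b)
        = detf n (\<lambda>a b. if a = i then ?h i b + c m * ?h (s + m) b else ?h a b)"
      by (rule detf_cong) (use sm in \<open>simp add: ac_simps\<close>)
    also have "\<dots> = detf n ?h" by (rule detf_add_row[OF i sm])
    also have "\<dots> = detf n g" using Suc by auto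
    finally show ?case .
  qed
  moreover have "detf n h = detf n (\<lambda>a b. if a = i then g i b + (\<Sum>k<m. c k * g (s + k) b) else g a b)"
    by (rule detf_cong) (simp add: h)
  ultimately show ?thesis by simp
qed

lemma detf_transpose: "detf n (\<lambda>i j. g j i) = detf n g"
proof -
  have "mat n n (\<lambda>(i,j). g j i) = (mat n n (\<lambda>(i,j). g i j))\<^sup>T"
    by (rule eq_matI) auto
  thus ?thesis unfolding detf_def using det_transpose[of "mat n n (\<lambda>(i,j). g i j)" n] by simp
qed

lemma mat_mult_vec_fun:
  "mat n n (\<lambda>(i,j). A i j) *\<^sub>v vec n w = vec n (\<lambda>i. \<Sum>j<n. A i j * w j)"
  by (rule eq_vecI) (auto simp: scalar_prod_def lessThan_atLeast0 intro!: sum.cong)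

lemma detf_nonzero_kernel:
  fixes A :: "nat \<Rightarrow> nat \<Rightarrow> 'a::field"
  assumes d: "detf n A \<noteq> 0" and ker: "\<And>i. i < n \<Longrightarrow> (\<Sum>j<n. A i j * w j) = 0"
    and j: "j < n"
  shows "w j = 0"
proof (rule ccontr)
  assume wj: "w j \<noteq> 0"
  let ?A = "mat n n (\<lambda>(i,j). A i j)"
  have "vec n w \<noteq> 0\<^sub>v n" using wj j by (metis index_vec index_zero_vec(1))
  moreover have "?A *\<^sub>v vec n w = 0\<^sub>v n"
    unfolding mat_mult_vec_fun by (rule eq_vecI) (auto simp: ker)
  ultimately have "det ?A = 0"
    by (subst det_0_iff_vec_prod_zero_field[of ?A n]) (auto intro!: exI[of _ "vec n w"])
  thus False using d unfolding detf_def by simp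
qed

lemma detf_zero_kernel:
  fixes A :: "nat \<Rightarrow> nat \<Rightarrow> 'a::field"
  assumes d: "detf n A = 0"
  obtains w where "\<exists>j<n. w j \<noteq> 0" and "\<And>i. i < n \<Longrightarrow> (\<Sum>j<n. A i j * w j) = 0"
proof -
  let ?A = "mat n n (\<lambda>(i,j). A i j)"
  obtain v where v: "v \<in> carrier_vec n" "v \<noteq> 0\<^sub>v n" "?A *\<^sub>v v = 0\<^sub>v n"
    using d det_0_iff_vec_prod_zero_field[of ?A n] unfolding detf_def by auto
  have vv: "v = vec n (\<lambda>j. v $ j)" using v(1) by (intro eq_vecI) auto
  show ?thesis
  proof
    show "\<exists>j<n. v $ j \<noteq> 0"
    proof (rule ccontr)
      assume "\<not> (\<exists>j<n. v $ j \<noteq> 0)"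
      hence "v = 0\<^sub>v n" using v(1) by (intro eq_vecI) auto
      thus False using v(2) by simp
    qed
    fix i assume i: "i < n"
    have "(?A *\<^sub>v vec n (\<lambda>j. v $ j)) $ i = 0" unfolding vv[symmetric] using v(3) i by simp
    thus "(\<Sum>j<n. A i j * v $ j) = 0" unfolding mat_mult_vec_fun using i by simp
  qed
qed

lemma detf_nonzero_solvable:
  fixes A :: "nat \<Rightarrow> nat \<Rightarrow> 'a::field"
  assumes d: "detf n A \<noteq> 0"
  obtains w where "\<And>i. i < n \<Longrightarrow> (\<Sum>j<n. A i j * w j) = b i"
proof -
  let ?A = "mat n n (\<lambda>(i,j). A i j)"
  have A: "?A \<in> carrier_mat n n" by simp
  have "?A \<in> Units (ring_mat TYPE('a) n ())"
    by (rule det_non_zero_imp_unit[OF A]) (use d in \<open>simp add: detf_def\<close>)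
  then obtain B where B: "B \<in> carrier_mat n n" "?A * B = 1\<^sub>m n"
    unfolding Units_def ring_mat_def by auto
  let ?x = "B *\<^sub>v vec n b"
  have "?A *\<^sub>v ?x = (?A * B) *\<^sub>v vec n b"
    using B A by (metis assoc_mult_mat_vec vec_carrier)
  hence eq: "?A *\<^sub>v ?x = vec n b" using B by simp
  have xx: "?x = vec n (\<lambda>j. ?x $ j)" using B by (intro eq_vecI) auto
  show ?thesis
  proof
    fix i assume i: "i < n"
    have "(?A *\<^sub>v vec n (\<lambda>j. ?x $ j)) $ i = b i" unfolding xx[symmetric] using eq i by simp
    thus "(\<Sum>j<n. A i j * ?x $ j) = b i" unfolding mat_mult_vec_fun using i by simp
  qed
qed

lemma detf_cramer:
  assumes sol: "\<And>i. i < n \<Longrightarrow> (\<Sum>j<n. A i j * w j) = b i" and k: "k < n"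
  shows "w k * detf n A = detf n (\<lambda>i j. if j = k then b i else A i j)"
proof -
  let ?A = "mat n n (\<lambda>(i,j). A i j)"
  have e1: "?A *\<^sub>v vec n w = vec n b"
    unfolding mat_mult_vec_fun by (rule eq_vecI) (auto simp: sol)
  have e2: "det (replace_col ?A (?A *\<^sub>v vec n w) k) = vec n w $ k * det ?A"
    by (rule cramer_lemma_mat[OF _ _ k]) auto
  have e3: "replace_col ?A (vec n b) k = mat n n (\<lambda>(i,j). if j = k then b i else A i j)"
    unfolding replace_col_def by (rule eq_matI) auto
  show ?thesis using e2 k unfolding e1 e3 detf_def by simp
qed

lemma neg_one_power_square: "(-1::'a::ring_1) ^ m * (-1) ^ m = 1"
  by (simp add: power_add[symmetric] mult_2[symmetric] power_mult)

text \<open>In the next three lemmas the (m+2) x (m+2) matrix h has first and last rows vanishing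
  in the inner columns 1..m.  Then each corner minor reduces, by Laplace expansion along
  one of these rows, to a single entry times the central minor.\<close>
lemma detf_reduced_corners:
  fixes h :: "nat \<Rightarrow> nat \<Rightarrow> 'a::comm_ring_1"
  assumes u0: "\<And>i. i < m \<Longrightarrow> h 0 (Suc i) = 0"
    and v0: "\<And>i. i < m \<Longrightarrow> h (Suc m) (Suc i) = 0"
  defines "N \<equiv> detf m (\<lambda>i j. h (Suc i) (Suc j))"
  shows "detf (Suc m) h = h 0 0 * N"
    and "detf (Suc m) (\<lambda>i j. h (Suc i) (Suc j)) = h (Suc m) (Suc m) * N"
    and "detf (Suc m) (\<lambda>i j. h i (Suc j)) = h 0 (Suc m) * ((-1)^m * N)"
    and "detf (Suc m) (\<lambda>i j. h (Suc i) j) = h (Suc m) 0 * ((-1)^m * N)"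
proof -
  have "detf (Suc m) h = h 0 0 * ((-1)^(0+0) *
     detf m (\<lambda>a b. h (if a < 0 then a else Suc a) (if b < 0 then b else Suc b)))"
    by (rule detf_unit_row) (auto simp: u0 gr0_conv_Suc)
  then show "detf (Suc m) h = h 0 0 * N" unfolding N_def by simp
  have "detf (Suc m) (\<lambda>i j. h (Suc i) (Suc j)) = h (Suc m) (Suc m) * ((-1)^(m+m) *
     detf m (\<lambda>a b. h (Suc (if a < m then a else Suc a)) (Suc (if b < m then b else Suc b))))"
    by (rule detf_unit_row) (auto simp: v0)
  also have "detf m (\<lambda>a b. h (Suc (if a < m then a else Suc a)) (Suc (if b < m then b else Suc b))) = N"
    unfolding N_def by (rule detf_cong) auto
  finally show "detf (Suc m) (\<lambda>i j. h (Suc i) (Suc j)) = h (Suc m) (Suc m) * N"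
    by (simp add: power_add neg_one_power_square)
  have "detf (Suc m) (\<lambda>i j. h i (Suc j)) = h 0 (Suc m) * ((-1)^(0+m) *
     detf m (\<lambda>a b. h (if a < 0 then a else Suc a) (Suc (if b < m then b else Suc b))))"
    by (rule detf_unit_row) (auto simp: u0)
  also have "detf m (\<lambda>a b. h (if a < 0 then a else Suc a) (Suc (if b < m then b else Suc b))) = N"
    unfolding N_def by (rule detf_cong) auto
  finally show "detf (Suc m) (\<lambda>i j. h i (Suc j)) = h 0 (Suc m) * ((-1)^m * N)" by simp
  have "detf (Suc m) (\<lambda>i j. h (Suc i) j) = h (Suc m) 0 * ((-1)^(m+0) *
     detf m (\<lambda>a b. h (Suc (if a < m then a else Suc a)) (if b < 0 then b else Suc b)))"
    by (rule detf_unit_row) (auto simp: v0 gr0_conv_Suc)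
  also have "detf m (\<lambda>a b. h (Suc (if a < m then a else Suc a)) (if b < 0 then b else Suc b)) = N"
    unfolding N_def by (rule detf_cong) auto
  finally show "detf (Suc m) (\<lambda>i j. h (Suc i) j) = h (Suc m) 0 * ((-1)^m * N)" by simp
qed

text \<open>Only the first and last entries of row 0 contribute to the full determinant.\<close>
lemma detf_reduced_full:
  fixes h :: "nat \<Rightarrow> nat \<Rightarrow> 'a::comm_ring_1"
  assumes u0: "\<And>i. i < m \<Longrightarrow> h 0 (Suc i) = 0"
    and v0: "\<And>i. i < m \<Longrightarrow> h (Suc m) (Suc i) = 0"
  defines "N \<equiv> detf m (\<lambda>i j. h (Suc i) (Suc j))"
  shows "detf (Suc (Suc m)) h = N * (h 0 0 * h (Suc m) (Suc m) - h 0 (Suc m) * h (Suc m) 0)"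
proof -
  note corners = detf_reduced_corners[where m=m and h=h, OF u0 v0, folded N_def]
  let ?F = "\<lambda>j. h 0 j * ((-1)^(0+j) *
    detf (Suc m) (\<lambda>a b. h (if a < 0 then a else Suc a) (if b < j then b else Suc b)))"
  have "detf (Suc (Suc m)) h = (\<Sum>j<Suc (Suc m). ?F j)"
    by (rule detf_laplace) simp
  also have "\<dots> = (\<Sum>j\<in>{0, Suc m}. ?F j)"
  proof (rule sum.mono_neutral_right)
    show "\<forall>j\<in>{..<Suc (Suc m)} - {0, Suc m}. ?F j = 0"
    proof
      fix j assume "j \<in> {..<Suc (Suc m)} - {0, Suc m}"
      then obtain i where "j = Suc i" "i < m" by (cases j) auto
      thus "?F j = 0" by (simp add: u0)
    qed
  qed auto
  also have "\<dots> = ?F 0 + ?F (Suc m)" by simp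
  also have "?F 0 = h 0 0 * (h (Suc m) (Suc m) * N)"
  proof -
    have "detf (Suc m) (\<lambda>a b. h (if a < 0 then a else Suc a) (if b < 0 then b else Suc b))
        = detf (Suc m) (\<lambda>i j. h (Suc i) (Suc j))" by (rule detf_cong) auto
    thus ?thesis using corners(2) by simp
  qed
  also have "?F (Suc m) = - (h 0 (Suc m) * (h (Suc m) 0 * N))"
  proof -
    have "detf (Suc m) (\<lambda>a b. h (if a < 0 then a else Suc a) (if b < Suc m then b else Suc b))
        = detf (Suc m) (\<lambda>i j. h (Suc i) j)" by (rule detf_cong) auto
    hence "?F (Suc m) = h 0 (Suc m) * ((-1)^(Suc m) * (h (Suc m) 0 * ((-1)^m * N)))"
      using corners(4) by simp
    also have "\<dots> = - (h 0 (Suc m) * (h (Suc m) 0 * N) * ((-1)^m * (-1)^m))"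
      by (simp add: algebra_simps)
    finally show ?thesis by (simp add: neg_one_power_square)
  qed
  finally show ?thesis by (simp add: algebra_simps)
qed

lemma desnanot_jacobi_reduced:
  fixes h :: "nat \<Rightarrow> nat \<Rightarrow> 'a::comm_ring_1"
  assumes u0: "\<And>i. i < m \<Longrightarrow> h 0 (Suc i) = 0"
    and v0: "\<And>i. i < m \<Longrightarrow> h (Suc m) (Suc i) = 0"
  shows "detf (Suc (Suc m)) h * detf m (\<lambda>i j. h (Suc i) (Suc j)) =
     detf (Suc m) h * detf (Suc m) (\<lambda>i j. h (Suc i) (Suc j))
     - detf (Suc m) (\<lambda>i j. h i (Suc j)) * detf (Suc m) (\<lambda>i j. h (Suc i) j)"
proof -
  define N where "N = detf m (\<lambda>i j. h (Suc i) (Suc j))"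
  have full: "detf (Suc (Suc m)) h = N * (h 0 0 * h (Suc m) (Suc m) - h 0 (Suc m) * h (Suc m) 0)"
    unfolding N_def using u0 v0 by (rule detf_reduced_full)
  have corners: "detf (Suc m) h = h 0 0 * N"
    "detf (Suc m) (\<lambda>i j. h (Suc i) (Suc j)) = h (Suc m) (Suc m) * N"
    "detf (Suc m) (\<lambda>i j. h i (Suc j)) = h 0 (Suc m) * ((-1)^m * N)"
    "detf (Suc m) (\<lambda>i j. h (Suc i) j) = h (Suc m) 0 * ((-1)^m * N)"
    unfolding N_def by (rule detf_reduced_corners, (fact u0 v0)+)+
  have "(h 0 (Suc m) * ((-1)^m * N)) * (h (Suc m) 0 * ((-1)^m * N))
      = h 0 (Suc m) * h (Suc m) 0 * N * N * ((-1::'a)^m * (-1)^m)"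
    by (simp add: algebra_simps)
  then show ?thesis
    unfolding full corners N_def[symmetric] by (simp add: neg_one_power_square algebra_simps)
qed

text \<open>When the inner minor is
  invertible, subtracting suitable combinations of the inner rows from the first and last
  rows reduces the general case to the previous lemma without changing any of the
  determinants involved.\<close>
lemma desnanot_jacobi:
  fixes g :: "nat \<Rightarrow> nat \<Rightarrow> 'a::field"
  assumes inner: "detf m (\<lambda>i j. g (Suc i) (Suc j)) \<noteq> 0"
  shows "detf (Suc (Suc m)) g * detf m (\<lambda>i j. g (Suc i) (Suc j)) =
     detf (Suc m) g * detf (Suc m) (\<lambda>i j. g (Suc i) (Suc j))
     - detf (Suc m) (\<lambda>i j. g i (Suc j)) * detf (Suc m) (\<lambda>i j. g (Suc i) j)"
proof -
  have inner_T: "detf m (\<lambda>i j. g (Suc j) (Suc i)) \<noteq> 0"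
    using inner detf_transpose[of m "\<lambda>i j. g (Suc i) (Suc j)"] by simp
  obtain p where p: "\<And>i. i < m \<Longrightarrow> (\<Sum>j<m. g (Suc j) (Suc i) * p j) = g 0 (Suc i)"
    using detf_nonzero_solvable[OF inner_T, where b="\<lambda>i. g 0 (Suc i)"] by blast
  obtain q where q: "\<And>i. i < m \<Longrightarrow> (\<Sum>j<m. g (Suc j) (Suc i) * q j) = g (Suc m) (Suc i)"
    using detf_nonzero_solvable[OF inner_T, where b="\<lambda>i. g (Suc m) (Suc i)"] by blast
  define u where "u b = g 0 b + (\<Sum>k<m. (- p k) * g (Suc k) b)" for b
  define v where "v b = g (Suc m) b + (\<Sum>k<m. (- q k) * g (Suc k) b)" for b
  define h1 where "h1 a b = (if a = 0 then u b else g a b)" for a b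
  define h where "h a b = (if a = 0 then u b else if a = Suc m then v b else g a b)" for a b
  have u0: "h 0 (Suc i) = 0" if "i < m" for i
    using p that unfolding h_def u_def by (simp add: sum_negf mult.commute)
  have v0: "h (Suc m) (Suc i) = 0" if "i < m" for i
    using q that unfolding h_def v_def by (simp add: sum_negf mult.commute)
  have "detf (Suc (Suc m)) h = detf (Suc (Suc m)) h1"
    by (rule detf_add_rows[where i="Suc m" and m=m and s=1 and c="\<lambda>k. - q k"])
       (auto simp: h1_def h_def v_def)
  also have "\<dots> = detf (Suc (Suc m)) g"
    by (rule detf_add_rows[where i=0 and m=m and s=1 and c="\<lambda>k. - p k"])
       (auto simp: h1_def u_def)
  finally have full: "detf (Suc (Suc m)) h = detf (Suc (Suc m)) g" .
  have inner_h: "detf m (\<lambda>i j. h (Suc i) (Suc j)) = detf m (\<lambda>i j. g (Suc i) (Suc j))"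
    by (rule detf_cong) (auto simp: h_def)
  have upper_left: "detf (Suc m) h = detf (Suc m) g"
    by (rule detf_add_rows[where i=0 and m=m and s=1 and c="\<lambda>k. - p k"])
       (auto simp: h_def u_def)
  have lower_right: "detf (Suc m) (\<lambda>i j. h (Suc i) (Suc j)) = detf (Suc m) (\<lambda>i j. g (Suc i) (Suc j))"
    by (rule detf_add_rows[where i=m and m=m and s=0 and c="\<lambda>k. - q k"])
       (auto simp: h_def v_def)
  have upper_right: "detf (Suc m) (\<lambda>i j. h i (Suc j)) = detf (Suc m) (\<lambda>i j. g i (Suc j))"
    by (rule detf_add_rows[where i=0 and m=m and s=1 and c="\<lambda>k. - p k"])
       (auto simp: h_def u_def)
  have lower_left: "detf (Suc m) (\<lambda>i j. h (Suc i) j) = detf (Suc m) (\<lambda>i j. g (Suc i) j)"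
    by (rule detf_add_rows[where i=m and m=m and s=0 and c="\<lambda>k. - q k"])
       (auto simp: h_def v_def)
  show ?thesis
    using desnanot_jacobi_reduced[of m h, OF u0 v0]
    unfolding full inner_h upper_left lower_right upper_right lower_left by simp
qed

definition hankel :: "(int \<Rightarrow> 'a) \<Rightarrow> int \<Rightarrow> nat \<Rightarrow> nat \<Rightarrow> 'a" where
  "hankel f n i j = f (n + int (i + j))"

lemma hankel_shift:
  "(\<lambda>i j. hankel f n (Suc i) (Suc j)) = hankel f (n + 2)"
  "(\<lambda>i j. hankel f n i (Suc j)) = hankel f (n + 1)"
  "(\<lambda>i j. hankel f n (Suc i) j) = hankel f (n + 1)"
  unfolding hankel_def by (auto simp: algebra_simps intro!: ext)

text \<open>For Hankel matrices all four corner minors in Desnanot-Jacobi are again Hankel,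
  which gives a three-term relation between Hankel determinants of consecutive sizes.\<close>
lemma hankel_desnanot_jacobi:
  fixes f :: "int \<Rightarrow> 'a::field"
  assumes "detf m (hankel f (n + 2)) \<noteq> 0"
  shows "detf (Suc (Suc m)) (hankel f n) * detf m (hankel f (n + 2)) =
    detf (Suc m) (hankel f n) * detf (Suc m) (hankel f (n + 2)) - (detf (Suc m) (hankel f (n + 1)))\<^sup>2"
  using desnanot_jacobi[of m "hankel f n"] assms unfolding hankel_shift by (simp add: power2_eq_square)

lemma hankel_det_vanish:
  fixes f :: "int \<Rightarrow> 'a::field"
  assumes const: "\<And>n. detf (Suc m) (hankel f n) = d" and nz: "\<And>n. detf m (hankel f n) \<noteq> 0"
  shows "detf (Suc (Suc m)) (hankel f n) = 0"
proof -
  have "detf (Suc (Suc m)) (hankel f n) * detf m (hankel f (n + 2)) = 0"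
    using hankel_desnanot_jacobi[OF nz] by (simp add: const power2_eq_square)
  thus ?thesis using nz by simp
qed

text \<open>Let A be a singular (N+1) x (N+1) matrix and V a vector with last entry 1 satisfying
  the equations of A V = 0 for the rows sigma 0, ..., sigma (N - 1).  If these rows,
  restricted to the first N columns, form an invertible matrix, then V is the normalised
  generator of the kernel, so it satisfies all equations of A V = 0.\<close>
lemma kernel_extension:
  fixes A :: "nat \<Rightarrow> nat \<Rightarrow> 'a::field"
  assumes sing: "detf (Suc N) A = 0"
    and minor: "detf N (\<lambda>i j. A (\<sigma> i) j) \<noteq> 0"
    and \<sigma>: "\<And>i. i < N \<Longrightarrow> \<sigma> i < Suc N"
    and rows: "\<And>i. i < N \<Longrightarrow> (\<Sum>j<Suc N. A (\<sigma> i) j * V j) = 0"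
    and V: "V N = 1" and i: "i < Suc N"
  shows "(\<Sum>j<Suc N. A i j * V j) = 0"
proof -
  obtain w where w_nz: "\<exists>j<Suc N. w j \<noteq> 0"
    and w: "\<And>i. i < Suc N \<Longrightarrow> (\<Sum>j<Suc N. A i j * w j) = 0"
    using detf_zero_kernel[OF sing] by blast
  have wN: "w N \<noteq> 0"
  proof
    assume wN0: "w N = 0"
    have "w j = 0" if "j < N" for j
    proof (rule detf_nonzero_kernel[OF minor _ that])
      fix k assume "k < N"
      then show "(\<Sum>j<N. A (\<sigma> k) j * w j) = 0" using w[of "\<sigma> k"] \<sigma> wN0 by simp
    qed
    with wN0 w_nz show False using less_Suc_eq by auto
  qed
  define W where "W j = w j / w N" for j
  have W: "(\<Sum>j<Suc N. A i j * W j) = 0" if "i < Suc N" for i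
    using w[OF that] unfolding W_def times_divide_eq_right sum_divide_distrib[symmetric] by simp
  have "V j = W j" if "j < N" for j
  proof -
    have "V j - W j = 0"
    proof (rule detf_nonzero_kernel[OF minor _ that])
      fix k assume k: "k < N"
      have "(\<Sum>j<Suc N. A (\<sigma> k) j * (V j - W j)) = 0"
        using rows[OF k] W[OF \<sigma>[OF k]] by (simp add: right_diff_distrib sum_subtractf)
      then show "(\<Sum>j<N. A (\<sigma> k) j * (V j - W j)) = 0" using V wN by (simp add: W_def)
    qed
    thus ?thesis by simp
  qed
  hence "V j = W j" if "j < Suc N" for j
    using that V wN by (auto simp: W_def less_Suc_eq)
  thus ?thesis using W[OF i] by simp
qed

text \<open>A sequence whose Hankel determinants of size N never vanish while those of size
  N + 1 all vanish satisfies a linear recurrence of order N, whose coefficients solve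
  the Hankel system at n = 0.  Writing e k for the recurrence expression at k, a window
  e n = ... = e (n + N - 1) = 0 extends one step forwards resp. backwards by the kernel
  extension lemma for the Hankel matrix at n, using its rows 0..N-1 resp. 1..N.\<close>
lemma hankel_recurrence:
  fixes f :: "int \<Rightarrow> 'a::field"
  assumes nz: "\<And>n. detf N (hankel f n) \<noteq> 0" and sing: "\<And>n. detf (Suc N) (hankel f n) = 0"
    and v: "\<And>i. i < N \<Longrightarrow> (\<Sum>j<N. hankel f 0 i j * v j) = - f (int (i + N))"
  shows "(\<Sum>j<N. f (n + int j) * v j) + f (n + int N) = 0"
proof -
  define V where "V j = (if j < N then v j else 1)" for j
  define e where "e k = (\<Sum>j<Suc N. f (k + int j) * V j)" for k
  have e_hankel: "(\<Sum>j<Suc N. hankel f n i j * V j) = e (n + int i)" for n i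
    unfolding e_def hankel_def by (intro sum.cong) (simp_all add: algebra_simps)
  have e_eq: "e k = (\<Sum>j<N. f (k + int j) * v j) + f (k + int N)" for k
    unfolding e_def V_def by simp
  define window where "window n \<longleftrightarrow> (\<forall>i<N. e (n + int i) = 0)" for n
  have forward: "e (n + int i) = 0" if "window n" "i < Suc N" for n i
    using kernel_extension[where A="hankel f n" and \<sigma>="\<lambda>i. i" and V=V, OF sing nz]
      that unfolding e_hankel window_def by (simp add: V_def)
  have backward: "e (n + int i) = 0" if "window (n + 1)" "i < Suc N" for n i
  proof -
    have "e (n + int (Suc k)) = 0" if "k < N" for k
      using \<open>window (n + 1)\<close> that unfolding window_def by (simp add: add.assoc)
    then show ?thesis
      using kernel_extension[where A="hankel f n" and \<sigma>=Suc and V=V, OF sing]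
        nz[of "n + 1"] that(2) unfolding e_hankel hankel_shift by (simp add: V_def)
  qed
  have "window n" for n
  proof (induction n rule: int_induct[where k=0])
    case base
    show ?case unfolding window_def e_eq using v by (simp add: hankel_def)
  next
    case (step1 n)
    have "e (n + int (Suc i)) = 0" if "i < N" for i
      using forward[OF step1(2), of "Suc i"] that by simp
    then show ?case unfolding window_def by (simp add: add_ac)
  next
    case (step2 n)
    show ?case unfolding window_def using backward[of "n - 1"] step2(2) by simp
  qed
  then show ?thesis using forward[of n 0] e_eq by simp
qed

text \<open>Under a recurrence of order M + 1, shifting a Hankel matrix of size M + 1 multiplies
  its determinant by (-1)^(M+1) v 0: by the recurrence and row operations, the last row
  of the shifted matrix becomes -v 0 times the first row of the unshifted one, whose
  other rows are the remaining rows of the shifted matrix.\<close>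
lemma hankel_shift_det:
  fixes f :: "int \<Rightarrow> 'a::field"
  assumes rec: "\<And>n. (\<Sum>j<Suc M. f (n + int j) * v j) + f (n + int (Suc M)) = 0"
  shows "detf (Suc M) (hankel f (n + 1)) = (-1) ^ Suc M * v 0 * detf (Suc M) (hankel f n)"
proof -
  define G where "G a b = (if a = M then - v 0 * f (n + int b) else hankel f (n + 1) a b)" for a b
  have G: "detf (Suc M) G = detf (Suc M) (hankel f (n + 1))"
  proof (rule detf_add_rows[where i=M and m=M and s=0 and c="\<lambda>k. v (Suc k)"])
    fix a b assume "a < Suc M" "b < Suc M"
    have "f (n + int b) * v 0 + (\<Sum>k<M. f (n + int b + int (Suc k)) * v (Suc k))
        + f (n + int b + int (Suc M)) = 0"
      using rec[of "n + int b"] by (simp only: sum.lessThan_Suc_shift) simp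
    then show "G a b = (if a = M then hankel f (n + 1) M b
        + (\<Sum>k<M. v (Suc k) * hankel f (n + 1) (0 + k) b) else hankel f (n + 1) a b)"
      unfolding G_def hankel_def by (auto simp: algebra_simps neg_eq_iff_add_eq_0)
  qed simp_all
  define minor where
    "minor j = detf M (\<lambda>a b. hankel f n (Suc a) (if b < j then b else Suc b))" for j
  have G_expand: "detf (Suc M) G = (\<Sum>j<Suc M. G M j * ((-1)^(M+j) * minor j))"
    unfolding detf_laplace[of M, OF lessI] minor_def
    by (intro sum.cong refl arg_cong2[where f="(*)"] detf_cong)
       (simp_all add: G_def hankel_def algebra_simps)
  have H_expand: "detf (Suc M) (hankel f n) = (\<Sum>j<Suc M. hankel f n 0 j * ((-1)^j * minor j))"
    unfolding detf_laplace[of 0, OF zero_less_Suc] minor_def by simp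
  have "detf (Suc M) G = (\<Sum>j<Suc M. (- v 0 * (-1)^M) * (hankel f n 0 j * ((-1)^j * minor j)))"
    unfolding G_expand by (intro sum.cong refl) (simp add: G_def hankel_def power_add)
  also have "\<dots> = (-1) ^ Suc M * v 0 * detf (Suc M) (hankel f n)"
    unfolding H_expand sum_distrib_left[symmetric] by simp
  finally show ?thesis using G by simp
qed

lemma rat_subfield_of_int: "of_int z \<in> rat_subfield S"
  using rat_subfield.rat[of "of_int z" S] by simp

lemma rat_subfield_1: "1 \<in> rat_subfield S"
  using rat_subfield_of_int[of 1] by simp

lemma rat_subfield_div:
  "a \<in> rat_subfield S \<Longrightarrow> b \<in> rat_subfield S \<Longrightarrow> a / b \<in> rat_subfield S"
  unfolding divide_inverse by (intro rat_subfield.mult rat_subfield.inv)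

lemma rat_subfield_pow: "a \<in> rat_subfield S \<Longrightarrow> a ^ n \<in> rat_subfield S"
  by (induction n) (auto intro: rat_subfield_1 rat_subfield.mult)

lemma rat_subfield_sum:
  "finite A \<Longrightarrow> (\<And>x. x \<in> A \<Longrightarrow> f x \<in> rat_subfield S) \<Longrightarrow> sum f A \<in> rat_subfield S"
  by (induction A rule: finite_induct) (auto intro: rat_subfield_of_int[of 0, simplified] rat_subfield.add)

lemma rat_subfield_prod:
  "finite A \<Longrightarrow> (\<And>x. x \<in> A \<Longrightarrow> f x \<in> rat_subfield S) \<Longrightarrow> prod f A \<in> rat_subfield S"
  by (induction A rule: finite_induct) (auto intro: rat_subfield_1 rat_subfield.mult)

lemma rat_subfield_detf:
  assumes "\<And>i j. i < n \<Longrightarrow> j < n \<Longrightarrow> F i j \<in> rat_subfield S"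
  shows "detf n F \<in> rat_subfield S"
proof -
  have "detf n F = (\<Sum>p\<in>{p. p permutes {0..<n}}.
      signof p * (\<Prod>i = 0..<n. mat n n (\<lambda>(i,j). F i j) $$ (i, p i)))"
    unfolding detf_def by (rule det_def') simp
  also have "\<dots> \<in> rat_subfield S"
  proof (rule rat_subfield_sum)
    show "finite {p. p permutes {0..<n}}" by (simp add: finite_permutations)
    fix p assume "p \<in> {p. p permutes {0..<n}}"
    hence p: "p i < n" if "i < n" for i using that permutes_in_image[of p "{0..<n}" i] by auto
    have "(\<Prod>i = 0..<n. mat n n (\<lambda>(i,j). F i j) $$ (i, p i)) \<in> rat_subfield S"
      by (rule rat_subfield_prod) (use p assms in auto)
    thus "signof p * (\<Prod>i = 0..<n. mat n n (\<lambda>(i,j). F i j) $$ (i, p i)) \<in> rat_subfield S"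
      by (rule rat_subfield.mult[OF rat_subfield_of_int])
  qed
  finally show ?thesis .
qed

text \<open>By Cramer's rule, the solution of a nonsingular linear system lies in the subfield
  generated by its coefficients.\<close>
lemma rat_subfield_solution:
  fixes A :: "nat \<Rightarrow> nat \<Rightarrow> 'a::field_char_0"
  assumes d: "detf n A \<noteq> 0"
    and A: "\<And>i j. i < n \<Longrightarrow> j < n \<Longrightarrow> A i j \<in> rat_subfield S"
    and b: "\<And>i. i < n \<Longrightarrow> b i \<in> rat_subfield S"
    and sol: "\<And>i. i < n \<Longrightarrow> (\<Sum>j<n. A i j * w j) = b i" and k: "k < n"
  shows "w k \<in> rat_subfield S"
proof -
  have "w k = detf n (\<lambda>i j. if j = k then b i else A i j) / detf n A"
    using detf_cramer[OF sol k] d by (simp add: field_simps)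
  also have "\<dots> \<in> rat_subfield S"
    by (intro rat_subfield_div rat_subfield_detf) (use A b in auto)
  finally show ?thesis .
qed

lemma alternating_recurrence:
  fixes f :: "int \<Rightarrow> 'a::comm_ring_1"
  assumes rec: "(\<Sum>j<N. f (n + int j) * v j) + f (n + int N) = 0"
    and c: "\<And>k. k \<le> N \<Longrightarrow> c k = (-1) ^ k * (if k = 0 then 1 else v (N - k))"
  shows "(\<Sum>m = 0..N. (-1) ^ m * c (N - m) * f (n + int m)) = 0"
proof -
  have summand: "(-1) ^ m * c (N - m) * f (n + int m)
      = (-1) ^ N * (f (n + int m) * (if m = N then 1 else v m))" if "m \<le> N" for m
  proof -
    have "(-1::'a) ^ m * (-1) ^ (N - m) = (-1) ^ N"
      using that by (simp flip: power_add)
    then show ?thesis using that c[of "N - m"]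
      by (simp add: algebra_simps) (metis mult.assoc mult.commute)
  qed
  have "(\<Sum>m = 0..N. (-1) ^ m * c (N - m) * f (n + int m))
      = (\<Sum>m<Suc N. (-1) ^ N * (f (n + int m) * (if m = N then 1 else v m)))"
    unfolding atLeast0AtMost lessThan_Suc_atMost[symmetric] by (intro sum.cong) (simp_all add: summand)
  also have "\<dots> = (-1) ^ N * ((\<Sum>j<N. f (n + int j) * v j) + f (n + int N))"
    by (simp add: sum_distrib_left distrib_left)
  finally show ?thesis using rec by simp
qed

locale qsystem =
  fixes r :: nat and R :: "nat \<Rightarrow> int \<Rightarrow> 'a::field_char_0"
  assumes R_bottom: "\<And>n. R 0 n = 1"
    and R_top: "\<And>n. R (Suc r) n = 1"
    and relation: "\<And>\<alpha> n. 1 \<le> \<alpha> \<Longrightarrow> \<alpha> \<le> r \<Longrightarrow>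
      R \<alpha> (n + 1) * R \<alpha> (n - 1) = (R \<alpha> n)\<^sup>2 + R (\<alpha> + 1) n * R (\<alpha> - 1) n"
    and nonzero: "\<And>\<alpha> n. \<alpha> \<le> Suc r \<Longrightarrow> R \<alpha> n \<noteq> 0"
begin

definition initial_values :: "'a set" where
  "initial_values = {R \<alpha> k | \<alpha> k. \<alpha> \<in> {1..r} \<and> k \<in> {0, 1}}"

lemma relation_solved:
  assumes "1 \<le> \<alpha>" "\<alpha> \<le> r" and "j = n \<and> j' = n + 2 \<or> j = n + 2 \<and> j' = n"
  shows "R \<alpha> j' = ((R \<alpha> (n + 1))\<^sup>2 + R (Suc \<alpha>) (n + 1) * R (\<alpha> - 1) (n + 1)) / R \<alpha> j"
proof -
  have "R \<alpha> (n + 2) * R \<alpha> n = (R \<alpha> (n + 1))\<^sup>2 + R (Suc \<alpha>) (n + 1) * R (\<alpha> - 1) (n + 1)"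
    using relation[OF assms(1,2), of "n + 1"] by (simp add: add.assoc)
  moreover have "R \<alpha> j \<noteq> 0" using nonzero assms by simp
  ultimately show ?thesis using assms(3) by (auto simp: field_simps)
qed

lemma R_boundary_in_subfield: "a = 0 \<or> a = Suc r \<Longrightarrow> R a k \<in> rat_subfield S"
  using R_bottom R_top rat_subfield_1 by auto

lemma R_step_in_subfield:
  assumes mid: "\<forall>a\<le>Suc r. R a (n + 1) \<in> rat_subfield S"
    and known: "\<forall>a\<le>Suc r. R a j \<in> rat_subfield S"
    and ends: "j = n \<and> j' = n + 2 \<or> j = n + 2 \<and> j' = n" and a: "a \<le> Suc r"
  shows "R a j' \<in> rat_subfield S"
proof (cases "a = 0 \<or> a = Suc r")
  case False
  hence "1 \<le> a" "a \<le> r" using a by auto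
  note solved = relation_solved[OF this ends]
  show ?thesis unfolding solved
    using mid known \<open>a \<le> r\<close>
    by (intro rat_subfield_div rat_subfield.add rat_subfield.mult rat_subfield_pow) auto
qed (rule R_boundary_in_subfield)

text \<open>Every R \<alpha> n lies in the field generated by the initial values: propagate the
  property from the columns n = 0, 1 forwards and backwards.\<close>
lemma R_in_subfield:
  assumes "\<alpha> \<le> Suc r"
  shows "R \<alpha> n \<in> rat_subfield initial_values"
proof -
  define known where "known k \<longleftrightarrow> (\<forall>a\<le>Suc r. R a k \<in> rat_subfield initial_values)" for k
  have initial: "known k" if "k \<in> {0, 1}" for k
    unfolding known_def
  proof (intro allI impI)
    fix a assume "a \<le> Suc r"
    then consider "a = 0 \<or> a = Suc r" | "a \<in> {1..r}" by fastforce
    then show "R a k \<in> rat_subfield initial_values"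
    proof cases
      case 2
      then show ?thesis using that unfolding initial_values_def by (blast intro: rat_subfield.gen)
    qed (rule R_boundary_in_subfield)
  qed
  have "known k \<and> known (k + 1)" for k
  proof (induction k rule: int_induct[where k=0])
    case base
    show ?case using initial by simp
  next
    case (step1 k)
    then show ?case
      using R_step_in_subfield[where n=k and j=k and j'="k + 2"] unfolding known_def by (simp add: add.assoc)
  next
    case (step2 k)
    then show ?case
      using R_step_in_subfield[where n="k - 1" and j="k + 1" and j'="k - 1"] unfolding known_def by simp
  qed
  then show ?thesis using assms unfolding known_def by blast
qed

text \<open>The Hankel determinants of R 1 are the R \<alpha>: this is the Q-system relation read
  as the Desnanot-Jacobi identity.\<close>
lemma hankel_R1: "a \<le> Suc r \<Longrightarrow> detf a (hankel (R 1) n) = R a (n + int a - 1)"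
proof (induction a arbitrary: n rule: less_induct)
  case (less a)
  consider "a = 0" | "a = 1" | m where "a = Suc (Suc m)"
    by (metis One_nat_def not0_implies_Suc)
  then show ?case
  proof cases
    case 1
    then show ?thesis by (simp add: R_bottom)
  next
    case 2
    then show ?thesis by (simp add: detf_1 hankel_def)
  next
    case 3
    have IH_inner: "detf m (hankel (R 1) (n + 2)) = R m (n + int m + 1)"
      using less 3 by (simp add: algebra_simps)
    have IH_mid: "detf (Suc m) (hankel (R 1) k) = R (Suc m) (k + int m)" for k
      using less.IH[of "Suc m" k] less.prems 3 by simp
    have inner_nz: "R m (n + int m + 1) \<noteq> 0" using nonzero less.prems 3 by simp
    have "detf (Suc (Suc m)) (hankel (R 1) n) * R m (n + int m + 1)
        = R (Suc m) (n + int m) * R (Suc m) (n + int m + 2) - (R (Suc m) (n + int m + 1))\<^sup>2"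
      using hankel_desnanot_jacobi[of m "R 1" n] inner_nz
      unfolding IH_inner IH_mid by (simp add: algebra_simps)
    also have "\<dots> = R (Suc (Suc m)) (n + int m + 1) * R m (n + int m + 1)"
      using relation[of "Suc m" "n + int m + 1"] less.prems 3 by (simp add: algebra_simps)
    finally show ?thesis using inner_nz 3 by (simp add: algebra_simps)
  qed
qed

lemma hankel_R1_top: "detf (Suc r) (hankel (R 1) n) = 1"
  using hankel_R1[of "Suc r"] R_top by simp

lemma hankel_R1_singular: "detf (Suc (Suc r)) (hankel (R 1) n) = 0"
  by (rule hankel_det_vanish[OF hankel_R1_top]) (use hankel_R1[of r] nonzero[of r] in simp)

lemma R1_linear_recurrence:
  obtains v where "\<And>j. j < Suc r \<Longrightarrow> v j \<in> rat_subfield initial_values"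
    and "(-1) ^ Suc r * v 0 = 1"
    and "\<And>n. (\<Sum>j<Suc r. R 1 (n + int j) * v j) + R 1 (n + int (Suc r)) = 0"
proof -
  have nz: "detf (Suc r) (hankel (R 1) n) \<noteq> 0" for n
    using hankel_R1_top[of n] by simp
  obtain v where v: "\<And>i. i < Suc r \<Longrightarrow> (\<Sum>j<Suc r. hankel (R 1) 0 i j * v j) = - R 1 (int (i + Suc r))"
    using detf_nonzero_solvable[OF nz, where b="\<lambda>i. - R 1 (int (i + Suc r))"] by blast
  have rec: "(\<Sum>j<Suc r. R 1 (n + int j) * v j) + R 1 (n + int (Suc r)) = 0" for n
    by (rule hankel_recurrence[OF nz hankel_R1_singular v])
  have v0: "(-1) ^ Suc r * v 0 = 1"
    using hankel_shift_det[OF rec, of 0] hankel_R1_top[of 0] hankel_R1_top[of 1] by simp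
  have v_in: "v j \<in> rat_subfield initial_values" if "j < Suc r" for j
    by (rule rat_subfield_solution[OF nz _ _ v that])
       (auto simp: hankel_def intro: R_in_subfield rat_subfield.neg)
  show ?thesis by (rule that[OF v_in v0 rec])
qed

end

theorem mainTheorem2:
  fixes r :: nat and R :: "nat \<Rightarrow> int \<Rightarrow> 'a::field_char_0"
  assumes "r \<ge> 1"
    and "alg_indep_over_Q {(\<alpha>, k). \<alpha> \<in> {1..r} \<and> k \<in> {0, 1}} (\<lambda>(\<alpha>, k). R \<alpha> k)"
    and "\<forall>n. R 0 n = 1 \<and> R (r + 1) n = 1"
    and "\<forall>\<alpha>\<in>{1..r}. \<forall>n. R \<alpha> (n + 1) * R \<alpha> (n - 1) = (R \<alpha> n)\<^sup>2 + R (\<alpha> + 1) n * R (\<alpha> - 1) n"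
    and "\<forall>\<alpha>\<in>{0..r + 1}. \<forall>n. R \<alpha> n \<noteq> 0"
  shows "\<exists>c :: nat \<Rightarrow> 'a.
           (\<forall>i\<in>{1..r}. c i \<in> rat_subfield {R \<alpha> k | \<alpha> k. \<alpha> \<in> {1..r} \<and> k \<in> {0, 1}}) \<and>
           c 0 = 1 \<and> c (r + 1) = 1 \<and>
           (\<forall>n::int. (\<Sum>m = 0..r + 1. (-1) ^ m * c (r + 1 - m) * R 1 (n + int m)) = 0)"
proof -
  interpret qsystem r R
    using assms(3-5) by unfold_locales auto
  obtain v where v_in: "\<And>j. j < Suc r \<Longrightarrow> v j \<in> rat_subfield initial_values"
    and v0: "(-1) ^ Suc r * v 0 = 1"
    and rec: "\<And>n. (\<Sum>j<Suc r. R 1 (n + int j) * v j) + R 1 (n + int (Suc r)) = 0"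
    using R1_linear_recurrence by blast
  define c where "c k = (-1) ^ k * (if k = 0 then 1 else v (Suc r - k))" for k :: nat
  have "c i \<in> rat_subfield initial_values" if "i \<in> {1..r}" for i
    unfolding c_def using that v_in[of "Suc r - i"]
    by (auto intro!: rat_subfield.mult rat_subfield_pow rat_subfield_of_int[of "-1", simplified])
  moreover have "c 0 = 1" "c (r + 1) = 1"
    using v0 by (simp_all add: c_def)
  moreover have "(\<Sum>m = 0..r + 1. (-1) ^ m * c (r + 1 - m) * R 1 (n + int m)) = 0" for n
    using alternating_recurrence[OF rec, of c] by (simp add: c_def)
  ultimately show ?thesis unfolding initial_values_def by blast
qed

end
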